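(* Let $S$ be a semigroup and $T$ a finitely generated weakly pseudo-right-unitary subsemigroup of $S$. Let $\sigma : X^+ \to T$ and $\tau : Y^+ \to S$ be choices of generators such that $X \subseteq Y$ and $\sigma$ is the restriction of $\tau$ to $X^+$. Then $L_\sigma(T) = L_\tau(S) \cap \hat{X}^*$.
   Context: For a semigroup $S$, $S^1$ denotes the monoid obtained by adjoining a new identity $1$ (even if $S$ already has one). A choice of generators for $S$ is a surjective morphism $\sigma : X^+ \to S$ from a free semigroup; it extends uniquely to $\sigma^1 : X^* \to S^1$. Let $\overline{X} = \{\overline{x} : x \in X\}$ be a set of formal inverses, $\hat{X} = X \cup \overline{X}$ (and $\hat Y$ similarly, so $\hat X \subseteq \hat Y$). The loop automaton of $S$ with respect to $\sigma$ is the directed labelled graph with vertex set $S^1$, having for each $a \in S^1$ and $x \in X$ an edge from $a$ to $a(x\sigma)$ labelled $x$ and an edge from $a(x\sigma)$ to $a$ labelled $\overline{x}$. The loop problem $L_\sigma(S) \subseteq \hat{X}^*$ is the set of words labelling paths from $1$ to $1$ in this graph (including the empty word). A subsemigroup $T$ of $S$ is weakly pseudo-right-unitary if for every $a \in S$ and every pair $x, y \in T$ with $ax \in T$, there exists $b \in T$ with $ax = bx$ and $ay = by$. *)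

theory Defs
  imports Main
begin

text \<open>The ambient semigroup S is the whole type 'a (class semigroup_mult).
  S^1 is modelled as 'a option, with None the adjoined identity.\<close>

definition mult1 :: "'a::semigroup_mult option \<Rightarrow> 'a \<Rightarrow> 'a option" where
  "mult1 a s = Some (case a of None \<Rightarrow> s | Some b \<Rightarrow> b * s)"

fun word_val :: "('x \<Rightarrow> 'a::semigroup_mult) \<Rightarrow> 'x list \<Rightarrow> 'a" where
  "word_val g [] = undefined"
| "word_val g [x] = g x"
| "word_val g (x # y # ys) = g x * word_val g (y # ys)"

definition subsemigroup :: "'a::semigroup_mult set \<Rightarrow> bool" where
  "subsemigroup T \<longleftrightarrow> (\<forall>x\<in>T. \<forall>y\<in>T. x * y \<in> T)"

definition gen_choice :: "'a::semigroup_mult set \<Rightarrow> 'x set \<Rightarrow> ('x \<Rightarrow> 'a) \<Rightarrow> bool" where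
  "gen_choice V X g \<longleftrightarrow> V = {word_val g w | w. w \<noteq> [] \<and> set w \<subseteq> X}"

definition fin_generated :: "'a::semigroup_mult set \<Rightarrow> bool" where
  "fin_generated T \<longleftrightarrow> (\<exists>F. finite F \<and> gen_choice T F id)"

definition weakly_pseudo_right_unitary :: "'a::semigroup_mult set \<Rightarrow> bool" where
  "weakly_pseudo_right_unitary T \<longleftrightarrow>
     (\<forall>a x y. x \<in> T \<longrightarrow> y \<in> T \<longrightarrow> a * x \<in> T \<longrightarrow>
        (\<exists>b\<in>T. a * x = b * x \<and> a * y = b * y))"

datatype 'x hat = Pos 'x | Neg 'x

definition hat :: "'x set \<Rightarrow> 'x hat set" where
  "hat X = Pos ` X \<union> Neg ` X"

text \<open>Paths in the loop automaton with vertex set V^1 = {None} \<union> Some ` V: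
  reach V g w a b holds iff w labels a path from a to b.\<close>
fun reach :: "'a::semigroup_mult set \<Rightarrow> ('x \<Rightarrow> 'a) \<Rightarrow> 'x hat list \<Rightarrow> 'a option \<Rightarrow> 'a option \<Rightarrow> bool" where
  "reach V g [] a b \<longleftrightarrow> a = b"
| "reach V g (Pos x # w) a b \<longleftrightarrow> reach V g w (mult1 a (g x)) b"
| "reach V g (Neg x # w) a b \<longleftrightarrow>
     (\<exists>c. (c = None \<or> (\<exists>v\<in>V. c = Some v)) \<and> mult1 c (g x) = a \<and> reach V g w c b)"

definition loop_problem :: "'a::semigroup_mult set \<Rightarrow> 'x set \<Rightarrow> ('x \<Rightarrow> 'a) \<Rightarrow> 'x hat list set" where
  "loop_problem V X g = {w. set w \<subseteq> hat X \<and> reach V g w None None}"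

end

theory Submission
  imports Defs
begin

text \<open>Words over \<open>X\<close> labelling a path in the loop automaton of \<open>S\<close> between vertices of
  \<open>T\<^sup>1\<close> may leave \<open>T\<^sup>1\<close>, but only through a vertex \<open>a\<close> with \<open>a q \<in> T\<^sup>1\<close> for the product
  \<open>q \<in> T\<^sup>1\<close> of the inverse letters just read. Weak pseudo-right-unitarity lets such a
  vertex be replaced by some \<open>b \<in> T\<^sup>1\<close> with \<open>b q = a q\<close> that also agrees with \<open>a\<close> on the
  next letter. Hence, by induction on the word: whenever \<open>a q \<in> T\<^sup>1\<close>, some \<open>b \<in> T\<^sup>1\<close> with
  \<open>b q = a q\<close> carries a path with the same label and endpoint inside \<open>T\<^sup>1\<close>; the case
  \<open>q = 1\<close> says that paths between vertices of \<open>T\<^sup>1\<close> can be kept inside \<open>T\<^sup>1\<close>.\<close>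

instantiation option :: (semigroup_mult) monoid_mult
begin

definition one_option :: "'a option" where
  "1 = None"

definition times_option :: "'a option \<Rightarrow> 'a option \<Rightarrow> 'a option" where
  "a * b = (case a of None \<Rightarrow> b | Some s \<Rightarrow> (case b of None \<Rightarrow> a | Some t \<Rightarrow> Some (s * t)))"

instance
  by standard (auto simp: one_option_def times_option_def mult.assoc split: option.split)

end

lemma times_option_simps [simp]:
  "None * b = b"
  "a * None = a"
  "Some s * Some t = Some (s * t)"
  by (auto simp: times_option_def split: option.split)

lemma mult1_eq_times: "mult1 a s = a * Some s"
  by (cases a) (simp_all add: mult1_def)

definition with_one :: "'a set \<Rightarrow> 'a option set" where
  "with_one V = insert None (Some ` V)"

lemma in_with_one_iff: "c \<in> with_one V \<longleftrightarrow> c = None \<or> (\<exists>v\<in>V. c = Some v)"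
  by (auto simp: with_one_def)

lemma None_in_with_one [simp]: "None \<in> with_one V"
  and Some_in_with_one_iff [simp]: "Some s \<in> with_one V \<longleftrightarrow> s \<in> V"
  by (auto simp: with_one_def)

lemma with_one_UNIV [simp]: "with_one UNIV = UNIV"
  by (auto simp: in_with_one_iff)

lemma reach_Pos_iff: "reach V g (Pos x # w) a b \<longleftrightarrow> reach V g w (a * Some (g x)) b"
  by (simp add: mult1_eq_times)

lemma reach_Neg_iff:
  "reach V g (Neg x # w) a b \<longleftrightarrow> (\<exists>c\<in>with_one V. c * Some (g x) = a \<and> reach V g w c b)"
  unfolding reach.simps(3) mult1_eq_times in_with_one_iff Bex_def ..

declare reach.simps(2,3) [simp del] reach_Pos_iff [simp] reach_Neg_iff [simp]

lemma with_one_mult_closed: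
  assumes "subsemigroup T" "a \<in> with_one T" "b \<in> with_one T"
  shows "a * b \<in> with_one T"
  using assms by (auto simp: with_one_def subsemigroup_def)

lemma gen_choice_generators_in: "gen_choice V X g \<Longrightarrow> g ` X \<subseteq> V"
  unfolding gen_choice_def by (force intro: exI[of _ "[x]" for x])

lemma hat_mono: "X \<subseteq> Y \<Longrightarrow> hat X \<subseteq> hat Y"
  by (auto simp: hat_def)

lemma reach_UNIV_if_reach: "reach V g w a b \<Longrightarrow> reach UNIV g w a b"
proof (induction w arbitrary: a)
  case (Cons h w)
  then show ?case by (cases h) auto
qed simp

lemma weakly_pseudo_right_unitary_with_one:
  assumes "weakly_pseudo_right_unitary T" "q \<in> with_one T" "a * q \<in> with_one T" "z \<in> T"
  obtains b where "b \<in> with_one T" "b * q = a * q" "b * Some z = a * Some z"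
proof (cases "a = None \<or> q = None")
  case True
  then show ?thesis using assms(3) that[of a] that[of None] by auto
next
  case False
  then obtain s q' where "a = Some s" "q = Some q'" by auto
  with assms obtain t where "t \<in> T" "s * q' = t * q'" "s * z = t * z"
    unfolding weakly_pseudo_right_unitary_def by fastforce
  with \<open>a = Some s\<close> \<open>q = Some q'\<close> show ?thesis using that[of "Some t"] by auto
qed

lemma reach_with_one_if_reach_UNIV_times:
  assumes sub: "subsemigroup T" and gens: "g ` X \<subseteq> T"
    and wpru: "weakly_pseudo_right_unitary T"
    and "set w \<subseteq> hat X" "reach UNIV g w a e" "e \<in> with_one T"
    and "q \<in> with_one T" "a * q \<in> with_one T"
  shows "\<exists>b\<in>with_one T. b * q = a * q \<and> reach T g w b e"
  using assms(4-)
proof (induction w arbitrary: a q)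
  case Nil
  then show ?case by auto
next
  case (Cons h w)
  show ?case
  proof (cases h)
    case (Pos z)
    with Cons.prems gens have z: "g z \<in> T" and az: "reach UNIV g w (a * Some (g z)) e"
      by (auto simp: hat_def)
    obtain b where b: "b \<in> with_one T" "b * q = a * q" "b * Some (g z) = a * Some (g z)"
      using weakly_pseudo_right_unitary_with_one[OF wpru Cons.prems(4,5) z] .
    then have "a * Some (g z) \<in> with_one T"
      using with_one_mult_closed[OF sub] z by (metis Some_in_with_one_iff)
    then have "reach T g w (a * Some (g z)) e"
      using Cons.IH[of "a * Some (g z)" 1] Cons.prems az by (auto simp: one_option_def)
    with b Pos show ?thesis by auto
  next
    case (Neg x)
    with Cons.prems gens have x: "g x \<in> T" by (auto simp: hat_def)
    from Cons.prems Neg obtain c where c: "c * Some (g x) = a" "reach UNIV g w c e"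
      by auto
    \<comment> \<open>the inverse letter is absorbed into the right factor\<close>
    have "Some (g x) * q \<in> with_one T" "c * (Some (g x) * q) = a * q"
      using with_one_mult_closed[OF sub] x Cons.prems(4) c(1) by (auto simp: mult.assoc)
    with Cons.IH[of c "Some (g x) * q"] Cons.prems c(2) obtain d where
      d: "d \<in> with_one T" "d * (Some (g x) * q) = a * q" "reach T g w d e"
      by auto
    have "d * Some (g x) \<in> with_one T"
      using with_one_mult_closed[OF sub d(1)] x by simp
    moreover have "d * Some (g x) * q = a * q"
      using d(2) by (simp add: mult.assoc)
    moreover have "reach T g (h # w) (d * Some (g x)) e"
      using Neg d(1,3) by auto
    ultimately show ?thesis by blast
  qed
qed

corollary reach_with_one_if_reach_UNIV:
  assumes "subsemigroup T" "g ` X \<subseteq> T" "weakly_pseudo_right_unitary T"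
    and "set w \<subseteq> hat X" "reach UNIV g w a e" "a \<in> with_one T" "e \<in> with_one T"
  shows "reach T g w a e"
  using reach_with_one_if_reach_UNIV_times[OF assms(1-5,7), of 1]
  by (simp add: assms(6) one_option_def)

theorem proposition3p2:
  fixes T :: "'a::semigroup_mult set" and X Y :: "'x set" and \<tau> :: "'x \<Rightarrow> 'a"
  assumes "subsemigroup T"
    and "fin_generated T"
    and "weakly_pseudo_right_unitary T"
    and "X \<subseteq> Y"
    and "gen_choice T X \<tau>"
    and "gen_choice (UNIV :: 'a set) Y \<tau>"
  shows "loop_problem T X \<tau> = loop_problem (UNIV :: 'a set) Y \<tau> \<inter> lists (hat X)"
proof -
  have gens: "\<tau> ` X \<subseteq> T"
    using assms(5) by (rule gen_choice_generators_in)
  show ?thesis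
  proof (intro equalityI subsetI)
    fix w assume "w \<in> loop_problem T X \<tau>"
    then show "w \<in> loop_problem UNIV Y \<tau> \<inter> lists (hat X)"
      using hat_mono[OF assms(4)] reach_UNIV_if_reach by (auto simp: loop_problem_def)
  next
    fix w assume "w \<in> loop_problem UNIV Y \<tau> \<inter> lists (hat X)"
    then show "w \<in> loop_problem T X \<tau>"
      using reach_with_one_if_reach_UNIV[OF assms(1) gens assms(3)]
      by (auto simp: loop_problem_def lists_eq_set)
  qed
qed

end
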